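(* Let $V$ be a vector space and $U_1,U_2,U_3\subset V$ subspaces. Put $U=U_1\times U_2\times U_3\subset X=V\times V\times V$ and $Y=\{(v,v,v):v\in V\}\subset X$. Then $X=U+Y$ if and only if $V=U_1+(U_2\cap U_3)=U_2+(U_3\cap U_1)=U_3+(U_1\cap U_2)$. *)

theory Defs
  imports Complex_Main "HOL-Library.Product_Plus"
begin

definition setsum_sp :: "'b::ab_group_add set \<Rightarrow> 'b set \<Rightarrow> 'b set" where
  "setsum_sp A B = {a + b | a b. a \<in> A \<and> b \<in> B}"

end

theory Submission
  imports Defs
begin

text \<open>
  A triple \<open>(x, y, z)\<close> lies in \<open>U + Y\<close> iff a single vector \<open>v\<close> brings all three coordinates
  into their subspaces at once: \<open>x - v \<in> U\<^sub>1\<close>, \<open>y - v \<in> U\<^sub>2\<close>, \<open>z - v \<in> U\<^sub>3\<close>.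
  Taking \<open>(x, 0, 0)\<close> forces \<open>v \<in> U\<^sub>2 \<inter> U\<^sub>3\<close>, which gives \<open>V = U\<^sub>1 + (U\<^sub>2 \<inter> U\<^sub>3)\<close>, and symmetrically
  for the other two. Conversely, writing \<open>x - z = s + r\<close> and \<open>y - z = p + q\<close> with
  \<open>s \<in> U\<^sub>1\<close>, \<open>r \<in> U\<^sub>2 \<inter> U\<^sub>3\<close>, \<open>p \<in> U\<^sub>2\<close>, \<open>q \<in> U\<^sub>3 \<inter> U\<^sub>1\<close>, the vector \<open>v = z + q + r\<close> works.
  In particular any two of the three conditions already imply the third, and only the
  additive group structure of the subspaces is used.
\<close>

definition add_subgroup :: "'b::ab_group_add set \<Rightarrow> bool" where
  "add_subgroup U \<longleftrightarrow> 0 \<in> U \<and> (\<forall>x\<in>U. \<forall>y\<in>U. x + y \<in> U) \<and> (\<forall>x\<in>U. - x \<in> U)"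

lemma add_subgroup_diff:
  assumes "add_subgroup U" "x \<in> U" "y \<in> U"
  shows "x - y \<in> U"
  using assms unfolding add_subgroup_def by (metis diff_conv_add_uminus)

lemma subspace_imp_add_subgroup:
  assumes "module scale" "module.subspace scale U"
  shows "add_subgroup U"
proof -
  interpret module scale by fact
  show ?thesis
    using assms(2) by (simp add: add_subgroup_def subspace_def subspace_neg)
qed

lemma setsum_sp_diagonal_eq_UNIV_iff:
  "setsum_sp (U1 \<times> U2 \<times> U3) {(v, v, v) | v. True} = UNIV
     \<longleftrightarrow> (\<forall>x y z. \<exists>v. x - v \<in> U1 \<and> y - v \<in> U2 \<and> z - v \<in> U3)"
proof -
  have "(x, y, z) \<in> setsum_sp (U1 \<times> U2 \<times> U3) {(v, v, v) | v. True}
          \<longleftrightarrow> (\<exists>v. x - v \<in> U1 \<and> y - v \<in> U2 \<and> z - v \<in> U3)" for x y z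
  proof
    assume "(x, y, z) \<in> setsum_sp (U1 \<times> U2 \<times> U3) {(v, v, v) | v. True}"
    then obtain u1 u2 u3 v where "u1 \<in> U1" "u2 \<in> U2" "u3 \<in> U3" "(x, y, z) = (u1 + v, u2 + v, u3 + v)"
      unfolding setsum_sp_def by auto
    then show "\<exists>v. x - v \<in> U1 \<and> y - v \<in> U2 \<and> z - v \<in> U3" by (intro exI[of _ v]) simp
  next
    assume "\<exists>v. x - v \<in> U1 \<and> y - v \<in> U2 \<and> z - v \<in> U3"
    then obtain v where "(x - v, y - v, z - v) \<in> U1 \<times> U2 \<times> U3" by auto
    moreover have "(x, y, z) = (x - v, y - v, z - v) + (v, v, v)" by simp
    ultimately show "(x, y, z) \<in> setsum_sp (U1 \<times> U2 \<times> U3) {(v, v, v) | v. True}"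
      unfolding setsum_sp_def by blast
  qed
  then show ?thesis by auto
qed

lemma setsum_sp_inter_eq_UNIV_if_common_shift:
  assumes "add_subgroup U2" "add_subgroup U3"
    and shift: "\<forall>x y z. \<exists>v. x - v \<in> U1 \<and> y - v \<in> U2 \<and> z - v \<in> U3"
  shows "setsum_sp U1 (U2 \<inter> U3) = UNIV"
proof -
  have "x \<in> setsum_sp U1 (U2 \<inter> U3)" for x
  proof -
    obtain v where v: "x - v \<in> U1" "- v \<in> U2" "- v \<in> U3"
      using shift by (metis diff_0)
    then have "v \<in> U2 \<inter> U3"
      using assms(1,2) unfolding add_subgroup_def by (metis IntI minus_minus)
    moreover have "x = (x - v) + v" by simp
    ultimately show ?thesis
      using v(1) unfolding setsum_sp_def by blast
  qed
  then show ?thesis by auto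
qed

lemma common_shift_if_setsum_sp_inter_eq_UNIV:
  assumes sub1: "add_subgroup U1" and sub2: "add_subgroup U2" and sub3: "add_subgroup U3"
    and sum1: "setsum_sp U1 (U2 \<inter> U3) = UNIV"
    and sum2: "setsum_sp U2 (U3 \<inter> U1) = UNIV"
  shows "\<exists>v. x - v \<in> U1 \<and> y - v \<in> U2 \<and> z - v \<in> U3"
proof -
  obtain s r where sr: "s \<in> U1" "r \<in> U2 \<inter> U3" "x - z = s + r"
    using sum1 unfolding setsum_sp_def by blast
  obtain p q where pq: "p \<in> U2" "q \<in> U3 \<inter> U1" "y - z = p + q"
    using sum2 unfolding setsum_sp_def by blast
  define v where "v = z + q + r"
  have "x - v = s - q" "y - v = p - r" "z - v = - (q + r)"
    using sr(3) pq(3) unfolding v_def by (simp_all add: algebra_simps eq_diff_eq)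
  moreover have "s - q \<in> U1" "p - r \<in> U2"
    using sr pq sub1 sub2 by (auto intro: add_subgroup_diff)
  moreover have "- (q + r) \<in> U3"
    using sr(2) pq(2) sub3 unfolding add_subgroup_def by blast
  ultimately show ?thesis by metis
qed

theorem lemma6p2:
  fixes scale :: "'a::field \<Rightarrow> 'b::ab_group_add \<Rightarrow> 'b"
    and U1 U2 U3 :: "'b set"
  assumes vs: "vector_space scale"
    and s1: "module.subspace scale U1"
    and s2: "module.subspace scale U2"
    and s3: "module.subspace scale U3"
  shows "(setsum_sp (U1 \<times> U2 \<times> U3) {(v, v, v) | v. True} = (UNIV :: ('b \<times> 'b \<times> 'b) set))
     \<longleftrightarrow> (setsum_sp U1 (U2 \<inter> U3) = UNIV \<and> setsum_sp U2 (U3 \<inter> U1) = UNIV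
          \<and> setsum_sp U3 (U1 \<inter> U2) = UNIV)"
proof -
  have sub: "add_subgroup U1" "add_subgroup U2" "add_subgroup U3"
    using vs[folded module_iff_vector_space] s1 s2 s3 by (auto intro: subspace_imp_add_subgroup)
  have "setsum_sp (U1 \<times> U2 \<times> U3) {(v, v, v) | v. True} = UNIV
          \<longleftrightarrow> (\<forall>x y z. \<exists>v. x - v \<in> U1 \<and> y - v \<in> U2 \<and> z - v \<in> U3)"
    by (rule setsum_sp_diagonal_eq_UNIV_iff)
  also have "\<dots> \<longleftrightarrow> setsum_sp U1 (U2 \<inter> U3) = UNIV \<and> setsum_sp U2 (U3 \<inter> U1) = UNIV
                      \<and> setsum_sp U3 (U1 \<inter> U2) = UNIV"
  proof
    assume shift: "\<forall>x y z. \<exists>v. x - v \<in> U1 \<and> y - v \<in> U2 \<and> z - v \<in> U3"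
    moreover have "\<forall>y z x. \<exists>v. y - v \<in> U2 \<and> z - v \<in> U3 \<and> x - v \<in> U1"
      and "\<forall>z x y. \<exists>v. z - v \<in> U3 \<and> x - v \<in> U1 \<and> y - v \<in> U2"
      using shift by blast+
    ultimately show "setsum_sp U1 (U2 \<inter> U3) = UNIV \<and> setsum_sp U2 (U3 \<inter> U1) = UNIV
                       \<and> setsum_sp U3 (U1 \<inter> U2) = UNIV"
      using sub setsum_sp_inter_eq_UNIV_if_common_shift by metis
  next
    assume "setsum_sp U1 (U2 \<inter> U3) = UNIV \<and> setsum_sp U2 (U3 \<inter> U1) = UNIV
              \<and> setsum_sp U3 (U1 \<inter> U2) = UNIV"
    with sub show "\<forall>x y z. \<exists>v. x - v \<in> U1 \<and> y - v \<in> U2 \<and> z - v \<in> U3"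
      by (blast intro: common_shift_if_setsum_sp_inter_eq_UNIV)
  qed
  finally show ?thesis .
qed

end
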